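(* Let $\mu \in \mathbb{R}$ and $\sigma > 0$. Let $z_1, z_2$ be independent random variables, each distributed as $\mathcal{N}(\mu, \sigma^2)$, and let $p_{\sigma} = \max\left( \frac{e^{z_1}}{e^{z_1}+e^{z_2}}, \frac{e^{z_2}}{e^{z_1}+e^{z_2}} \right)$ be the maximum softmax probability of the logit vector $(z_1, z_2)$. Then for any $\sigma_1, \sigma_2 > 0$ and any $\mu$, if $\sigma_2 > \sigma_1$ then $\mathbb{E}[p_{\sigma_2}] > \mathbb{E}[p_{\sigma_1}]$.
   Context: Binary classification setting: a model outputs a logit vector $(z_1,z_2)$, the predicted class probabilities are given by the softmax $p_i = e^{z_i}/(e^{z_1}+e^{z_2})$, and the confidence is the maximum softmax probability. $\mathbb{E}[p_\sigma]$ denotes the expected value of the confidence when both logits are independently drawn from $\mathcal{N}(\mu,\sigma^2)$. *)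

theory Defs
  imports "HOL-Probability.Probability"
begin

definition softmax_conf :: "real \<Rightarrow> real \<Rightarrow> real" where
  "softmax_conf z1 z2 =
     max (exp z1 / (exp z1 + exp z2)) (exp z2 / (exp z1 + exp z2))"

text \<open>Law of a single logit: N(mu, sigma^2) (sigma is the standard deviation).\<close>
definition logit_law :: "real \<Rightarrow> real \<Rightarrow> real measure" where
  "logit_law \<mu> \<sigma> = density lborel (normal_density \<mu> \<sigma>)"

definition expected_conf :: "real \<Rightarrow> real \<Rightarrow> real" where
  "expected_conf \<mu> \<sigma> =
     (\<integral>z. softmax_conf (fst z) (snd z) \<partial>(logit_law \<mu> \<sigma> \<Otimes>\<^sub>M logit_law \<mu> \<sigma>))"

end

theory Submission
  imports Defs
begin

text \<open>The confidence of a binary logit vector is the logistic sigmoid of the margin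
  \<open>\<bar>z\<^sub>1 - z\<^sub>2\<bar>\<close>, and under the law \<open>N(\<mu>, \<sigma>\<^sup>2)\<close> the margin is \<open>\<sigma>\<close> times the margin of two
  independent standard normals.  Hence \<open>E[p\<^sub>\<sigma>] = E[sigmoid (\<sigma> \<bar>x - y\<bar>)]\<close> with \<open>x, y\<close> standard
  normal; the integrand increases with \<open>\<sigma>\<close>, strictly wherever \<open>x \<noteq> y\<close>, and such a set, e.g. an
  open rectangle off the diagonal, has positive probability.\<close>

definition sigmoid :: "real \<Rightarrow> real" where
  "sigmoid t = 1 / (1 + exp (- t))"

lemma sigmoid_strict_mono: "s < t \<Longrightarrow> sigmoid s < sigmoid t"
  unfolding sigmoid_def by (intro divide_strict_left_mono) (auto simp: add_pos_pos)

lemma mono_sigmoid: "mono sigmoid"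
  by (metis monoI order_le_less sigmoid_strict_mono)

lemma sigmoid_bounded: "\<bar>sigmoid t\<bar> \<le> 1"
  unfolding sigmoid_def by (auto simp: add_pos_pos)

lemma borel_measurable_sigmoid[measurable]: "sigmoid \<in> borel_measurable borel"
  unfolding sigmoid_def by measurable

lemma softmax_conf_eq_sigmoid_abs: "softmax_conf a b = sigmoid \<bar>a - b\<bar>"
proof -
  have "exp a / (exp a + exp b) = sigmoid (a - b)" and "exp b / (exp a + exp b) = sigmoid (b - a)"
    by (simp_all add: sigmoid_def exp_diff field_simps add_pos_pos)
  then have "softmax_conf a b = sigmoid (max (a - b) (b - a))"
    by (simp only: softmax_conf_def max_of_mono[OF mono_sigmoid])
  then show ?thesis
    by (simp add: abs_real_def max_def)
qed

lemma prob_space_logit_law: "\<sigma> > 0 \<Longrightarrow> prob_space (logit_law \<mu> \<sigma>)"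
  unfolding logit_law_def by (rule prob_space_normal_density)

lemma sets_logit_law[simp, measurable_cong]: "sets (logit_law \<mu> \<sigma>) = sets borel"
  unfolding logit_law_def by simp

lemma null_sets_logit_law:
  assumes "\<sigma> > 0"
  shows "null_sets (logit_law \<mu> \<sigma>) = null_sets lborel"
proof -
  have density_nonzero: "ennreal (normal_density \<mu> \<sigma> x) \<noteq> 0" for x
    using normal_density_pos[OF assms, of \<mu> x] by simp
  have "A \<in> null_sets (logit_law \<mu> \<sigma>) \<longleftrightarrow> A \<in> sets lborel \<and> (AE x in lborel. x \<notin> A)" for A
    unfolding logit_law_def by (simp add: null_sets_density_iff density_nonzero)
  also have "\<dots> A \<longleftrightarrow> A \<in> null_sets lborel" for A
    using AE_iff_null_sets[of A lborel] null_setsD2[of A lborel] by blast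
  finally show ?thesis
    by blast
qed

lemma emeasure_logit_law_Ioo_neq_0:
  assumes "\<sigma> > 0" and "a < b"
  shows "emeasure (logit_law \<mu> \<sigma>) {a<..<b} \<noteq> 0"
proof -
  have "{a<..<b} \<notin> null_sets lborel"
    using assms(2) by (simp add: null_sets_def)
  then have "{a<..<b} \<notin> null_sets (logit_law \<mu> \<sigma>)"
    by (simp add: null_sets_logit_law[OF assms(1)])
  then show ?thesis
    by (auto intro: null_setsI)
qed

lemma logit_law_affine:
  assumes "\<sigma> > 0"
  shows "logit_law \<mu> \<sigma> = distr (logit_law 0 1) lborel (\<lambda>x. \<mu> + \<sigma> * x)"
proof -
  interpret prob_space "logit_law 0 1" by (rule prob_space_logit_law) simp
  have "distributed (logit_law 0 1) lborel (\<lambda>x. x) (normal_density 0 1)"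
    unfolding distributed_def logit_law_def by (auto simp: distr_id2)
  from normal_density_affine[OF this, of \<sigma> \<mu>] assms show ?thesis
    unfolding distributed_def logit_law_def by simp
qed

lemma integral_logit_law_pair_standardize:
  fixes f :: "real \<times> real \<Rightarrow> real"
  assumes "\<sigma> > 0" and f: "f \<in> borel_measurable (borel \<Otimes>\<^sub>M borel)"
  shows "(\<integral>z. f z \<partial>(logit_law \<mu> \<sigma> \<Otimes>\<^sub>M logit_law \<mu> \<sigma>)) =
    (\<integral>z. f (\<mu> + \<sigma> * fst z, \<mu> + \<sigma> * snd z) \<partial>(logit_law 0 1 \<Otimes>\<^sub>M logit_law 0 1))"
proof -
  interpret prob_space "logit_law \<mu> \<sigma>" by (rule prob_space_logit_law[OF assms(1)])
  have affine_measurable: "(\<lambda>x. \<mu> + \<sigma> * x) \<in> measurable (logit_law 0 1) lborel"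
    by simp
  have "logit_law \<mu> \<sigma> \<Otimes>\<^sub>M logit_law \<mu> \<sigma> =
      distr (logit_law 0 1 \<Otimes>\<^sub>M logit_law 0 1) lborel
        (\<lambda>(x, y). (\<mu> + \<sigma> * x, \<mu> + \<sigma> * y))"
    unfolding logit_law_affine[OF assms(1)] lborel_prod[symmetric]
    by (rule pair_measure_distr[OF affine_measurable affine_measurable])
      (use logit_law_affine[OF assms(1)] sigma_finite_measure_axioms in simp)
  moreover have "f \<in> borel_measurable lborel"
    using f by (simp add: borel_prod)
  ultimately show ?thesis
    by (simp add: case_prod_beta integral_distr)
qed

lemma expected_conf_eq_integral_sigmoid:
  assumes "\<sigma> > 0"
  shows "expected_conf \<mu> \<sigma> =
    (\<integral>z. sigmoid (\<sigma> * \<bar>fst z - snd z\<bar>) \<partial>(logit_law 0 1 \<Otimes>\<^sub>M logit_law 0 1))"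
  unfolding expected_conf_def softmax_conf_eq_sigmoid_abs
  by (subst integral_logit_law_pair_standardize[OF assms], measurable)
    (simp add: abs_mult abs_of_pos[OF assms] flip: right_diff_distrib)

lemma integral_sigmoid_scaled_margin_strict_mono:
  assumes "0 \<le> s" and "s < t"
  shows "(\<integral>z. sigmoid (s * \<bar>fst z - snd z\<bar>) \<partial>(logit_law 0 1 \<Otimes>\<^sub>M logit_law 0 1)) <
    (\<integral>z. sigmoid (t * \<bar>fst z - snd z\<bar>) \<partial>(logit_law 0 1 \<Otimes>\<^sub>M logit_law 0 1))"
proof -
  let ?N = "logit_law 0 1"
  interpret N: prob_space ?N by (rule prob_space_logit_law) simp
  interpret pair_prob_space ?N ?N ..
  have integrable: "integrable (?N \<Otimes>\<^sub>M ?N) (\<lambda>z. sigmoid (c * \<bar>fst z - snd z\<bar>))" for c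
    by (rule integrable_const_bound[where B=1]) (auto simp: sigmoid_bounded)
  let ?A = "{0<..<1} \<times> {1<..<2} :: (real \<times> real) set"
  have A_not_null: "emeasure (?N \<Otimes>\<^sub>M ?N) ?A \<noteq> 0"
    using emeasure_logit_law_Ioo_neq_0[of 1 0 1 0] emeasure_logit_law_Ioo_neq_0[of 1 1 2 0]
    by (subst N.emeasure_pair_measure_Times) auto
  have strict_on_A: "sigmoid (s * \<bar>fst z - snd z\<bar>) < sigmoid (t * \<bar>fst z - snd z\<bar>)"
    if "z \<in> ?A" for z
    using that assms by (intro sigmoid_strict_mono mult_strict_right_mono) auto
  have le_everywhere: "sigmoid (s * \<bar>fst z - snd z\<bar>) \<le> sigmoid (t * \<bar>fst z - snd z\<bar>)" for z
    using assms by (intro monoD[OF mono_sigmoid] mult_right_mono) auto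
  show ?thesis
  proof (rule integral_less_AE[OF integrable integrable A_not_null])
    show "?A \<in> sets (?N \<Otimes>\<^sub>M ?N)"
      by simp
    show "AE z\<in>?A in ?N \<Otimes>\<^sub>M ?N.
        sigmoid (s * \<bar>fst z - snd z\<bar>) \<noteq> sigmoid (t * \<bar>fst z - snd z\<bar>)"
      using strict_on_A by (intro AE_I2 impI less_imp_neq)
    show "AE z in ?N \<Otimes>\<^sub>M ?N. sigmoid (s * \<bar>fst z - snd z\<bar>) \<le> sigmoid (t * \<bar>fst z - snd z\<bar>)"
      using le_everywhere by (intro AE_I2)
  qed
qed

theorem proposition1:
  fixes \<mu> \<sigma>1 \<sigma>2 :: real
  assumes "\<sigma>1 > 0" and "\<sigma>2 > 0" and "\<sigma>2 > \<sigma>1"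
  shows "expected_conf \<mu> \<sigma>2 > expected_conf \<mu> \<sigma>1"
  using integral_sigmoid_scaled_margin_strict_mono[of \<sigma>1 \<sigma>2] assms
  by (simp add: expected_conf_eq_integral_sigmoid)

end
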